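(* Let $d\ge0$ and $n>d$ be integers, let $T\in L(n,d)$, let $T_1\in T$, and let $T'=T\setminus\{T_1\}$. Then $\mathcal{I}_{n,d}(\{T_1\})\times\mathcal{I}_{n,d}(T')$ and $\mathcal{I}_{n,d}(T)$ are isomorphic as posets.
   Context: For a finite set $X$ let $\operatorname{codim}_d(X)=d+1-|X|$. For a finite collection $\{T_1,\dots,T_l\}$ of pairwise distinct finite sets put $\rho_d(\{T_1,\dots,T_l\})=\sum_{i=1}^l\operatorname{codim}_d(T_i)$ (with $\rho_d(\emptyset)=0$) and $D_d(\{T_1,\dots,T_l\})=\operatorname{codim}_d(T_1\cap\cdots\cap T_l)-\rho_d(\{T_1,\dots,T_l\})$. For integers $d\ge0$, $n>d$, $L(n,d)$ is the set of all collections $T$ of subsets of $\{1,\dots,n\}$ such that (i) $D_d(T')>0$ for every $T'\subset T$ with $|T'|>1$, and (ii) $0\le|T_i|\le d$ for every $T_i\in T$. It is partially ordered by: $T<T'$ iff $\rho_d(T)<\rho_d(T')$ and for every $T_i\in T$ there exists $T'_j\in T'$ with $T'_j\subset T_i$; $T\le T'$ means $T<T'$ or $T=T'$. For $T\in L(n,d)$, $\mathcal{I}_{n,d}(T)=\{S\in L(n,d): S\le T\}$ with the induced order; products of posets carry the componentwise order. *)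

theory Defs
  imports Main
begin

definition codim :: "nat \<Rightarrow> nat set \<Rightarrow> int" where
  "codim d X = int d + 1 - int (card X)"

definition rho :: "nat \<Rightarrow> nat set set \<Rightarrow> int" where
  "rho d T = (\<Sum>X\<in>T. codim d X)"

definition Dd :: "nat \<Rightarrow> nat set set \<Rightarrow> int" where
  "Dd d T = codim d (\<Inter>T) - rho d T"

definition L :: "nat \<Rightarrow> nat \<Rightarrow> nat set set set" where
  "L n d = {T. T \<subseteq> Pow {1..n}
              \<and> (\<forall>T'. T' \<subseteq> T \<and> card T' > 1 \<longrightarrow> Dd d T' > 0)
              \<and> (\<forall>X\<in>T. card X \<le> d)}"

definition Lless :: "nat \<Rightarrow> nat set set \<Rightarrow> nat set set \<Rightarrow> bool" where
  "Lless d T T' \<longleftrightarrow> rho d T < rho d T' \<and> (\<forall>X\<in>T. \<exists>Y\<in>T'. Y \<subseteq> X)"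

definition Lle :: "nat \<Rightarrow> nat set set \<Rightarrow> nat set set \<Rightarrow> bool" where
  "Lle d T T' \<longleftrightarrow> Lless d T T' \<or> T = T'"

definition Ideal :: "nat \<Rightarrow> nat \<Rightarrow> nat set set \<Rightarrow> nat set set set" where
  "Ideal n d T = {S \<in> L n d. Lle d S T}"

definition poset_iso :: "'a set \<Rightarrow> ('a \<Rightarrow> 'a \<Rightarrow> bool) \<Rightarrow> 'b set \<Rightarrow> ('b \<Rightarrow> 'b \<Rightarrow> bool) \<Rightarrow> bool" where
  "poset_iso A leA B leB \<longleftrightarrow> (\<exists>f. bij_betw f A B \<and>
      (\<forall>x\<in>A. \<forall>y\<in>A. leA x y \<longleftrightarrow> leB (f x) (f y)))"

definition prod_le :: "('a \<Rightarrow> 'a \<Rightarrow> bool) \<Rightarrow> ('b \<Rightarrow> 'b \<Rightarrow> bool) \<Rightarrow> 'a \<times> 'b \<Rightarrow> 'a \<times> 'b \<Rightarrow> bool" where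
  "prod_le leA leB p q \<longleftrightarrow> leA (fst p) (fst q) \<and> leB (snd p) (snd q)"

end

theory Submission
  imports Defs
begin

text \<open>On \<open>L n d\<close> the order is plain refinement: if every member of \<open>S\<close> contains a member of
  \<open>T\<close>, then \<open>rho S \<le> rho T\<close> with equality only for \<open>S = T\<close>. Indeed a set of size at most
  \<open>d\<close> contains at most one member of \<open>T\<close>, so \<open>S\<close> splits into fibres over the members \<open>Y\<close> of
  \<open>T\<close>, and the defining inequality \<open>D > 0\<close> bounds the \<open>rho\<close> of each fibre by \<open>codim Y\<close>.
  For a partition \<open>T = A \<union> B\<close> the map \<open>(S, S') \<mapsto> S \<union> S'\<close> is then an order isomorphism
  from \<open>Ideal A \<times> Ideal B\<close> onto \<open>Ideal T\<close>, inverted by sorting the members of a collection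
  according to whether they lie above \<open>A\<close> or above \<open>B\<close>. That \<open>S \<union> S'\<close> again satisfies
  \<open>D > 0\<close> follows by grouping any subcollection into its fibres over \<open>T\<close> and comparing with
  the inequality for the members of \<open>T\<close> that it meets.\<close>

definition refines :: "'a set set \<Rightarrow> 'a set set \<Rightarrow> bool" where
  "refines S T \<longleftrightarrow> (\<forall>X\<in>S. \<exists>Y\<in>T. Y \<subseteq> X)"

definition above :: "'a set set \<Rightarrow> 'a set set \<Rightarrow> 'a set set" where
  "above A S = {X \<in> S. \<exists>Y\<in>A. Y \<subseteq> X}"

lemma sum_over_unique_fibres:
  assumes "finite S" "finite T" and unique: "\<And>x. x \<in> S \<Longrightarrow> \<exists>!y. y \<in> T \<and> R y x"
  shows "sum f S = (\<Sum>y\<in>T. sum f {x \<in> S. R y x})"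
proof -
  define g where "g x = (THE y. y \<in> T \<and> R y x)" for x
  have g: "g x \<in> T" "R (g x) x" "y \<in> T \<Longrightarrow> R y x \<Longrightarrow> y = g x" if "x \<in> S" for x y
  proof -
    from theI'[OF unique[OF that]] show "g x \<in> T" "R (g x) x" unfolding g_def by simp_all
    show "y \<in> T \<Longrightarrow> R y x \<Longrightarrow> y = g x"
      unfolding g_def by (rule the1_equality[OF unique[OF that], symmetric]) simp
  qed
  have "sum f S = (\<Sum>y\<in>T. sum f {x. x \<in> S \<and> g x = y})"
    using sum.group[OF assms(1,2), of g f] g(1) by (simp add: image_subset_iff)
  also have "\<dots> = (\<Sum>y\<in>T. sum f {x \<in> S. R y x})"
  proof (rule sum.cong)
    fix y assume "y \<in> T"
    then have "{x. x \<in> S \<and> g x = y} = {x \<in> S. R y x}" using g by blast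
    then show "sum f {x. x \<in> S \<and> g x = y} = sum f {x \<in> S. R y x}" by simp
  qed simp
  finally show ?thesis .
qed

lemma card_INT_le_card_Inter_plus:
  assumes "finite J" "J \<noteq> {}" and grow: "\<And>Y. Y \<in> J \<Longrightarrow> Y \<subseteq> A Y \<and> finite (A Y)"
  shows "card (\<Inter>Y\<in>J. A Y) \<le> card (\<Inter>J) + (\<Sum>Y\<in>J. card (A Y - Y))"
proof -
  obtain Y0 where "Y0 \<in> J" using assms(2) by blast
  then have fin_Inter: "finite (\<Inter>J)" using grow by (meson Inter_lower finite_subset)
  have fin_UN: "finite (\<Union>Y\<in>J. A Y - Y)" using assms(1) grow by blast
  have "card (\<Inter>Y\<in>J. A Y) \<le> card (\<Inter>J \<union> (\<Union>Y\<in>J. A Y - Y))"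
    by (rule card_mono) (use fin_Inter fin_UN in auto)
  also have "\<dots> \<le> card (\<Inter>J) + card (\<Union>Y\<in>J. A Y - Y)" by (rule card_Un_le)
  also have "\<dots> \<le> card (\<Inter>J) + (\<Sum>Y\<in>J. card (A Y - Y))"
    using card_UN_le[OF assms(1)] by simp
  finally show ?thesis .
qed

lemma codim_antimono: "finite B \<Longrightarrow> A \<subseteq> B \<Longrightarrow> codim d B \<le> codim d A"
  unfolding codim_def using card_mono by fastforce

lemma L_subset: "T \<in> L n d \<Longrightarrow> S \<subseteq> T \<Longrightarrow> S \<in> L n d"
  unfolding L_def by (auto dest: subset_trans)

lemma L_finite: "T \<in> L n d \<Longrightarrow> finite T"
  unfolding L_def by (metis (no_types, lifting) finite_Pow_iff finite_atLeastAtMost finite_subset mem_Collect_eq)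

lemma L_memberD: "T \<in> L n d \<Longrightarrow> X \<in> T \<Longrightarrow> X \<subseteq> {1..n} \<and> finite X \<and> card X \<le> d"
  unfolding L_def by (auto intro: finite_subset)

lemma L_rho_less_codim_Inter:
  "T \<in> L n d \<Longrightarrow> U \<subseteq> T \<Longrightarrow> card U > 1 \<Longrightarrow> rho d U < codim d (\<Inter>U)"
  unfolding L_def Dd_def by auto

lemma L_rho_le_codim_Inter:
  assumes "T \<in> L n d" "T \<noteq> {}" shows "rho d T \<le> codim d (\<Inter>T)"
proof (cases "card T > 1")
  case False
  with assms have "card T = 1" using L_finite[OF assms(1)]
    by (metis One_nat_def card_0_eq less_one linorder_neqE_nat)
  then obtain X where "T = {X}" by (rule card_1_singletonE)
  then show ?thesis unfolding rho_def by simp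
qed (use L_rho_less_codim_Inter[OF assms(1)] in fastforce)

text \<open>Two distinct members of \<open>T\<close> below a common set \<open>X\<close> of size at most \<open>d\<close> would violate
  \<open>D > 0\<close>: since \<open>|Y1 \<union> Y2| \<le> d\<close>, we get \<open>codim (Y1 \<inter> Y2) \<le> codim Y1 + codim Y2\<close>.\<close>
lemma L_unique_below:
  assumes T: "T \<in> L n d" and Y: "Y1 \<in> T" "Y2 \<in> T" "Y1 \<subseteq> X" "Y2 \<subseteq> X"
    and X: "finite X" "card X \<le> d"
  shows "Y1 = Y2"
proof (rule ccontr)
  assume ne: "Y1 \<noteq> Y2"
  have fin: "finite Y1" "finite Y2" using Y X finite_subset by auto
  have "rho d {Y1, Y2} < codim d (Y1 \<inter> Y2)"
    using L_rho_less_codim_Inter[OF T, of "{Y1, Y2}"] Y ne by simp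
  then have "d + 1 + card (Y1 \<inter> Y2) < card Y1 + card Y2"
    using ne unfolding rho_def codim_def by simp
  also have "\<dots> = card (Y1 \<union> Y2) + card (Y1 \<inter> Y2)" using card_Un_Int[OF fin] .
  also have "card (Y1 \<union> Y2) \<le> card X" using Y X by (intro card_mono) auto
  finally show False using X by linarith
qed

lemma rho_eq_sum_fibres:
  assumes T: "T \<in> L n d" and "finite S" and S: "\<forall>X\<in>S. finite X \<and> card X \<le> d"
    and "refines S T"
  shows "rho d S = (\<Sum>Y\<in>T. rho d {X \<in> S. Y \<subseteq> X})"
  unfolding rho_def
proof (rule sum_over_unique_fibres[OF \<open>finite S\<close> L_finite[OF T]])
  fix X assume "X \<in> S"
  then obtain Y where "Y \<in> T" "Y \<subseteq> X" using \<open>refines S T\<close> unfolding refines_def by blast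
  then show "\<exists>!Y. Y \<in> T \<and> Y \<subseteq> X" using L_unique_below[OF T] S \<open>X \<in> S\<close> by blast
qed

lemma rho_le_codim_below:
  assumes V: "V \<in> L n d" and below: "\<forall>X\<in>V. Y \<subseteq> X" and "card Y \<le> d"
  shows "rho d V \<le> codim d Y" and "rho d V = codim d Y \<Longrightarrow> V = {Y}"
proof -
  have "rho d V \<le> codim d Y \<and> (rho d V = codim d Y \<longrightarrow> V = {Y})"
  proof (cases "V = {}")
    case True
    then show ?thesis using \<open>card Y \<le> d\<close> unfolding rho_def codim_def by simp
  next
    case False
    then obtain X0 where "X0 \<in> V" by blast
    then have "finite (\<Inter>V)" using L_memberD[OF V] by (meson Inter_lower finite_subset)
    moreover have "Y \<subseteq> \<Inter>V" using below by blast
    ultimately have codim_Inter: "codim d (\<Inter>V) \<le> codim d Y" by (rule codim_antimono)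
    have "V = {Y}" if eq: "rho d V = codim d Y"
    proof -
      have "\<not> card V > 1"
        using L_rho_less_codim_Inter[OF V order_refl] codim_Inter eq by linarith
      then obtain X where X: "V = {X}"
        using False L_finite[OF V] by (metis One_nat_def card_0_eq card_1_singletonE less_one
            linorder_neqE_nat)
      then have "card X = card Y" using eq unfolding rho_def codim_def by simp
      moreover have "Y \<subseteq> X" "finite X" using X below L_memberD[OF V] by auto
      ultimately show ?thesis using X card_subset_eq by metis
    qed
    then show ?thesis using L_rho_le_codim_Inter[OF V False] codim_Inter by linarith
  qed
  then show "rho d V \<le> codim d Y" and "rho d V = codim d Y \<Longrightarrow> V = {Y}" by auto
qed

lemma rho_refines:
  assumes S: "S \<in> L n d" and T: "T \<in> L n d" and "refines S T"
  shows "rho d S \<le> rho d T" and "rho d S = rho d T \<Longrightarrow> S = T"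
proof -
  define V where "V Y = {X \<in> S. Y \<subseteq> X}" for Y
  have "\<forall>X\<in>S. finite X \<and> card X \<le> d" using L_memberD[OF S] by blast
  from rho_eq_sum_fibres[OF T L_finite[OF S] this \<open>refines S T\<close>]
  have rho_S: "rho d S = (\<Sum>Y\<in>T. rho d (V Y))" unfolding V_def .
  have fibre: "rho d (V Y) \<le> codim d Y" "rho d (V Y) = codim d Y \<Longrightarrow> V Y = {Y}"
    if "Y \<in> T" for Y
  proof -
    have VL: "V Y \<in> L n d" unfolding V_def by (rule L_subset[OF S]) blast
    have below: "\<forall>X\<in>V Y. Y \<subseteq> X" unfolding V_def by blast
    have "card Y \<le> d" using L_memberD[OF T that] by blast
    note rho_le_codim_below[OF VL below this]
    then show "rho d (V Y) \<le> codim d Y" "rho d (V Y) = codim d Y \<Longrightarrow> V Y = {Y}" .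
  qed
  show "rho d S \<le> rho d T"
    unfolding rho_S rho_def[of d T] by (rule sum_mono) (use fibre in blast)
  assume eq: "rho d S = rho d T"
  have V_singleton: "V Y = {Y}" if "Y \<in> T" for Y
  proof (rule fibre(2)[OF that], rule ccontr)
    assume "rho d (V Y) \<noteq> codim d Y"
    then have "\<exists>Y\<in>T. rho d (V Y) < codim d Y" using fibre(1)[OF that] that by force
    with fibre(1) have "(\<Sum>Y\<in>T. rho d (V Y)) < (\<Sum>Y\<in>T. codim d Y)"
      by (intro sum_strict_mono_ex1[OF L_finite[OF T]]) blast+
    then show False using eq unfolding rho_S rho_def[of d T] by simp
  qed
  show "S = T"
  proof
    show "S \<subseteq> T"
    proof
      fix X assume "X \<in> S"
      then obtain Y where "Y \<in> T" "Y \<subseteq> X" using \<open>refines S T\<close> unfolding refines_def by blast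
      then have "X \<in> V Y" using \<open>X \<in> S\<close> unfolding V_def by blast
      then show "X \<in> T" using V_singleton[OF \<open>Y \<in> T\<close>] \<open>Y \<in> T\<close> by simp
    qed
    show "T \<subseteq> S" using V_singleton unfolding V_def by blast
  qed
qed

lemma Lle_iff_refines: "S \<in> L n d \<Longrightarrow> T \<in> L n d \<Longrightarrow> Lle d S T \<longleftrightarrow> refines S T"
  unfolding Lle_def Lless_def refines_def
  using rho_refines[of S n d T] by (auto simp: refines_def order_less_le)

lemma Ideal_eq: "T \<in> L n d \<Longrightarrow> Ideal n d T = {S \<in> L n d. refines S T}"
  unfolding Ideal_def using Lle_iff_refines by blast

lemma members_of_L_fibres:
  assumes "refines S T" and "\<forall>Y\<in>T. {X \<in> S. Y \<subseteq> X} \<in> L n d"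
  shows "\<forall>X\<in>S. X \<subseteq> {1..n} \<and> finite X \<and> card X \<le> d"
proof
  fix X assume "X \<in> S"
  then obtain Y where "Y \<in> T" "Y \<subseteq> X" using assms(1) unfolding refines_def by blast
  then have "X \<in> {X \<in> S. Y \<subseteq> X}" using \<open>X \<in> S\<close> by blast
  then show "X \<subseteq> {1..n} \<and> finite X \<and> card X \<le> d" using L_memberD assms(2) \<open>Y \<in> T\<close> by blast
qed

text \<open>Writing \<open>A Y\<close> for the intersection of the fibre over \<open>Y\<close>, the fibre contributes at most
  \<open>codim Y - |A Y - Y|\<close> to \<open>rho U\<close>, while passing from \<open>\<Inter>T\<close> to \<open>\<Inter>U\<close> adds at most
  \<open>\<Sum> |A Y - Y|\<close> points; the strict inequality for \<open>T\<close> itself survives.\<close>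
lemma rho_less_codim_Inter_of_fibres:
  assumes T: "T \<in> L n d" and "card T > 1" and "finite U" and "refines U T"
    and fibres: "\<forall>Y\<in>T. {X \<in> U. Y \<subseteq> X} \<in> L n d \<and> {X \<in> U. Y \<subseteq> X} \<noteq> {}"
  shows "rho d U < codim d (\<Inter>U)"
proof -
  define V where "V Y = {X \<in> U. Y \<subseteq> X}" for Y
  define A where "A Y = \<Inter>(V Y)" for Y
  have members: "\<forall>X\<in>U. X \<subseteq> {1..n} \<and> finite X \<and> card X \<le> d"
    using members_of_L_fibres[OF \<open>refines U T\<close>] fibres by blast
  have A: "Y \<subseteq> A Y" "finite (A Y)" if "Y \<in> T" for Y
  proof -
    have "V Y \<noteq> {}" using fibres that unfolding V_def by simp
    then obtain X where "X \<in> V Y" by blast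
    then have "finite X" using members unfolding V_def by blast
    then show "finite (A Y)" using \<open>X \<in> V Y\<close> unfolding A_def by (meson Inter_lower finite_subset)
    show "Y \<subseteq> A Y" unfolding A_def V_def by blast
  qed
  have Inter_U: "\<Inter>U = (\<Inter>Y\<in>T. A Y)"
    using \<open>refines U T\<close> unfolding A_def V_def refines_def by blast
  have codim_A: "codim d (A Y) = codim d Y - int (card (A Y - Y))" if "Y \<in> T" for Y
    using A[OF that] card_Diff_subset[of Y "A Y"] card_mono[of "A Y" Y]
    unfolding codim_def by (simp add: finite_subset of_nat_diff)
  have "\<forall>X\<in>U. finite X \<and> card X \<le> d" using members by blast
  from rho_eq_sum_fibres[OF T \<open>finite U\<close> this \<open>refines U T\<close>]
  have "rho d U = (\<Sum>Y\<in>T. rho d (V Y))" unfolding V_def .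
  also have "\<dots> \<le> (\<Sum>Y\<in>T. codim d (A Y))"
  proof (rule sum_mono)
    fix Y assume "Y \<in> T"
    then have "V Y \<in> L n d" "V Y \<noteq> {}" using fibres unfolding V_def by blast+
    then show "rho d (V Y) \<le> codim d (A Y)" unfolding A_def by (rule L_rho_le_codim_Inter)
  qed
  also have "\<dots> = rho d T - (\<Sum>Y\<in>T. int (card (A Y - Y)))"
    unfolding rho_def by (simp add: codim_A sum_subtractf)
  also have "\<dots> < codim d (\<Inter>T) - (\<Sum>Y\<in>T. int (card (A Y - Y)))"
    using L_rho_less_codim_Inter[OF T order_refl \<open>card T > 1\<close>] by simp
  also have "\<dots> \<le> codim d (\<Inter>U)"
  proof -
    have "T \<noteq> {}" using \<open>card T > 1\<close> by auto
    from card_INT_le_card_Inter_plus[OF L_finite[OF T] this] A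
    have "card (\<Inter>U) \<le> card (\<Inter>T) + (\<Sum>Y\<in>T. card (A Y - Y))" unfolding Inter_U by blast
    then have "int (card (\<Inter>U)) \<le> int (card (\<Inter>T)) + (\<Sum>Y\<in>T. int (card (A Y - Y)))"
      by (simp only: of_nat_add[symmetric] of_nat_sum[symmetric] of_nat_le_iff)
    then show ?thesis unfolding codim_def by simp
  qed
  finally show ?thesis .
qed

lemma rho_less_codim_Inter_of_subcollection:
  assumes T: "T \<in> L n d" and "refines S T" and fibres: "\<forall>Y\<in>T. {X \<in> S. Y \<subseteq> X} \<in> L n d"
    and U: "U \<subseteq> S" "card U > 1"
  shows "rho d U < codim d (\<Inter>U)"
proof -
  define J where "J = {Y \<in> T. \<exists>X\<in>U. Y \<subseteq> X}"
  have J: "J \<in> L n d" unfolding J_def by (rule L_subset[OF T]) blast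
  have "finite U" using U(2) by (intro card_ge_0_finite) simp
  have "refines U J" unfolding refines_def
  proof
    fix X assume "X \<in> U"
    then obtain Y where "Y \<in> T" "Y \<subseteq> X" using U(1) \<open>refines S T\<close> unfolding refines_def by blast
    then show "\<exists>Y\<in>J. Y \<subseteq> X" using \<open>X \<in> U\<close> unfolding J_def by blast
  qed
  have fibres_U: "\<forall>Y\<in>J. {X \<in> U. Y \<subseteq> X} \<in> L n d \<and> {X \<in> U. Y \<subseteq> X} \<noteq> {}"
  proof
    fix Y assume "Y \<in> J"
    then have "Y \<in> T" "{X \<in> U. Y \<subseteq> X} \<noteq> {}" unfolding J_def by blast+
    moreover have "{X \<in> U. Y \<subseteq> X} \<subseteq> {X \<in> S. Y \<subseteq> X}" using U(1) by blast
    ultimately show "{X \<in> U. Y \<subseteq> X} \<in> L n d \<and> {X \<in> U. Y \<subseteq> X} \<noteq> {}"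
      using L_subset[OF bspec[OF fibres \<open>Y \<in> T\<close>]] by blast
  qed
  show ?thesis
  proof (cases "card J > 1")
    case True
    then show ?thesis
      by (rule rho_less_codim_Inter_of_fibres[OF J _ \<open>finite U\<close> \<open>refines U J\<close> fibres_U])
  next
    case False
    obtain X0 where "X0 \<in> U" using U(2) by fastforce
    then obtain Y where "Y \<in> J" using \<open>refines U J\<close> unfolding refines_def by blast
    have "U = {X \<in> U. Y \<subseteq> X}"
    proof -
      have "\<forall>Y'\<in>J. Y' = Y"
        using False \<open>Y \<in> J\<close> card_le_Suc0_iff_eq[OF L_finite[OF J]] by auto
      then show ?thesis using \<open>refines U J\<close> unfolding refines_def by blast
    qed
    then have "U \<in> L n d" using fibres_U \<open>Y \<in> J\<close> by metis
    then show ?thesis using L_rho_less_codim_Inter[OF _ order_refl U(2)] by blast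
  qed
qed

lemma L_glue:
  assumes T: "T \<in> L n d" and "refines S T" and fibres: "\<forall>Y\<in>T. {X \<in> S. Y \<subseteq> X} \<in> L n d"
  shows "S \<in> L n d"
proof -
  have "\<forall>X\<in>S. X \<subseteq> {1..n} \<and> finite X \<and> card X \<le> d"
    by (rule members_of_L_fibres[OF \<open>refines S T\<close> fibres])
  then have "S \<subseteq> Pow {1..n}" "\<forall>X\<in>S. card X \<le> d" by blast+
  moreover have "\<forall>U. U \<subseteq> S \<and> card U > 1 \<longrightarrow> Dd d U > 0"
    using rho_less_codim_Inter_of_subcollection[OF assms] unfolding Dd_def by simp
  ultimately show ?thesis unfolding L_def by blast
qed

lemma above_Un_left: "above (A \<union> B) S = above A S \<union> above B S"
  unfolding above_def by blast

lemma above_Un_right: "above A (S \<union> S') = above A S \<union> above A S'"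
  unfolding above_def by blast

lemma refines_iff_above_eq: "refines S A \<longleftrightarrow> above A S = S"
  unfolding refines_def above_def by blast

lemma refines_Un: "refines S A \<Longrightarrow> refines S' B \<Longrightarrow> refines (S \<union> S') (A \<union> B)"
  unfolding refines_def bex_Un by blast

lemma fibre_subset_above: "Y \<in> A \<Longrightarrow> {X \<in> S. Y \<subseteq> X} \<subseteq> above A S"
  unfolding above_def by blast

lemma above_Int_above_empty:
  assumes T: "T \<in> L n d" and "A \<subseteq> T" "B \<subseteq> T" "A \<inter> B = {}" and S: "S \<in> L n d"
  shows "above A S \<inter> above B S = {}"
proof -
  have False if "X \<in> S" "Y \<in> A" "Y \<subseteq> X" "Z \<in> B" "Z \<subseteq> X" for X Y Z
  proof -
    have "Y = Z" using L_unique_below[OF T, of Y Z X] L_memberD[OF S \<open>X \<in> S\<close>] assms that by blast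
    then show False using \<open>A \<inter> B = {}\<close> that by blast
  qed
  then show ?thesis unfolding above_def by blast
qed

lemma above_eq_empty_of_refines:
  assumes "T \<in> L n d" "A \<subseteq> T" "B \<subseteq> T" "A \<inter> B = {}" "S \<in> L n d" and "refines S B"
  shows "above A S = {}"
proof -
  have "above B S = S" using \<open>refines S B\<close> by (simp add: refines_iff_above_eq)
  moreover have "above A S \<subseteq> S" unfolding above_def by blast
  ultimately show ?thesis using above_Int_above_empty[OF assms(1-5)] by blast
qed

lemma above_Un_of_refines:
  assumes T: "A \<union> B \<in> L n d" and "A \<inter> B = {}" and S: "S \<in> L n d" "S' \<in> L n d"
    and "refines S A" "refines S' B"
  shows "above A (S \<union> S') = S" and "above B (S \<union> S') = S'"
proof -
  have "above A S' = {}" "above B S = {}"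
    using above_eq_empty_of_refines[OF T _ _ _ S(2) \<open>refines S' B\<close>]
      above_eq_empty_of_refines[OF T _ _ _ S(1) \<open>refines S A\<close>] \<open>A \<inter> B = {}\<close> by blast+
  then show "above A (S \<union> S') = S" and "above B (S \<union> S') = S'"
    using assms(5,6) unfolding above_Un_right refines_iff_above_eq by simp_all
qed

lemma L_Un_of_refines:
  assumes T: "A \<union> B \<in> L n d" and "A \<inter> B = {}" and S: "S \<in> L n d" "S' \<in> L n d"
    and "refines S A" "refines S' B"
  shows "S \<union> S' \<in> L n d"
proof (rule L_glue[OF T])
  show "refines (S \<union> S') (A \<union> B)" using assms(5,6) by (rule refines_Un)
  show "\<forall>Y\<in>A \<union> B. {X \<in> S \<union> S'. Y \<subseteq> X} \<in> L n d"
  proof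
    fix Y assume "Y \<in> A \<union> B"
    then show "{X \<in> S \<union> S'. Y \<subseteq> X} \<in> L n d"
    proof
      assume "Y \<in> A"
      from fibre_subset_above[OF this, of "S \<union> S'"] show ?thesis
        unfolding above_Un_of_refines(1)[OF assms] by (rule L_subset[OF S(1)])
    next
      assume "Y \<in> B"
      from fibre_subset_above[OF this, of "S \<union> S'"] show ?thesis
        unfolding above_Un_of_refines(2)[OF assms] by (rule L_subset[OF S(2)])
    qed
  qed
qed

lemma refines_of_refines_Un:
  assumes T: "T \<in> L n d" "A \<subseteq> T" "B \<subseteq> T" "A \<inter> B = {}" and S: "S \<in> L n d" "refines S A"
    and "refines R' B" and "refines S (R \<union> R')"
  shows "refines S R"
  unfolding refines_def
proof
  fix X assume "X \<in> S"
  then obtain Y where Y: "Y \<in> R \<union> R'" "Y \<subseteq> X" using \<open>refines S (R \<union> R')\<close> unfolding refines_def by blast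
  have "X \<in> above A S" using \<open>X \<in> S\<close> \<open>refines S A\<close> unfolding refines_iff_above_eq by simp
  have "Y \<notin> R'"
  proof
    assume "Y \<in> R'"
    then obtain Z where "Z \<in> B" "Z \<subseteq> Y" using \<open>refines R' B\<close> unfolding refines_def by blast
    then have "X \<in> above B S" using \<open>X \<in> S\<close> Y(2) unfolding above_def by blast
    then show False using \<open>X \<in> above A S\<close> above_Int_above_empty[OF T S(1)] by blast
  qed
  then show "\<exists>Y\<in>R. Y \<subseteq> X" using Y by blast
qed

lemma refines_Un_Un_iff:
  assumes T: "A \<union> B \<in> L n d" and "A \<inter> B = {}"
    and S: "S \<in> L n d" "refines S A" "S' \<in> L n d" "refines S' B"
    and R: "refines R A" "refines R' B"
  shows "refines (S \<union> S') (R \<union> R') \<longleftrightarrow> refines S R \<and> refines S' R'"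
proof
  assume "refines (S \<union> S') (R \<union> R')"
  then have "refines S (R \<union> R')" "refines S' (R' \<union> R)" unfolding refines_def by blast+
  moreover have "A \<subseteq> A \<union> B" "B \<subseteq> A \<union> B" "B \<inter> A = {}" using \<open>A \<inter> B = {}\<close> by blast+
  ultimately show "refines S R \<and> refines S' R'"
    using refines_of_refines_Un[OF T _ _ \<open>A \<inter> B = {}\<close> S(1,2) R(2)]
      refines_of_refines_Un[OF T _ _ _ S(3,4) R(1)] by blast
qed (blast intro: refines_Un)

lemma bij_betw_Un_Ideal:
  assumes T: "A \<union> B \<in> L n d" and "A \<inter> B = {}"
  shows "bij_betw (\<lambda>p. fst p \<union> snd p) (Ideal n d A \<times> Ideal n d B) (Ideal n d (A \<union> B))"
proof -
  let ?P = "Ideal n d A \<times> Ideal n d B" and ?I = "Ideal n d (A \<union> B)"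
  have "A \<in> L n d" "B \<in> L n d" using L_subset[OF T] by blast+
  then have P: "p \<in> ?P \<longleftrightarrow>
      fst p \<in> L n d \<and> refines (fst p) A \<and> snd p \<in> L n d \<and> refines (snd p) B" for p
    using Ideal_eq by (auto simp: mem_Times_iff)
  have I: "S \<in> ?I \<longleftrightarrow> S \<in> L n d \<and> refines S (A \<union> B)" for S
    using Ideal_eq[OF T] by simp
  show ?thesis
  proof (rule bij_betw_byWitness[where f' = "\<lambda>S. (above A S, above B S)"])
    show "\<forall>p\<in>?P. (above A (fst p \<union> snd p), above B (fst p \<union> snd p)) = p"
    proof
      fix p assume "p \<in> ?P"
      then show "(above A (fst p \<union> snd p), above B (fst p \<union> snd p)) = p"
        using above_Un_of_refines[OF T \<open>A \<inter> B = {}\<close>, of "fst p" "snd p"] unfolding P by simp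
    qed
    show "\<forall>S\<in>?I. fst (above A S, above B S) \<union> snd (above A S, above B S) = S"
    proof
      fix S assume "S \<in> ?I"
      then show "fst (above A S, above B S) \<union> snd (above A S, above B S) = S"
        unfolding I refines_iff_above_eq by (simp add: above_Un_left)
    qed
    show "(\<lambda>p. fst p \<union> snd p) ` ?P \<subseteq> ?I"
    proof (rule image_subsetI)
      fix p assume "p \<in> ?P"
      then show "fst p \<union> snd p \<in> ?I"
        using L_Un_of_refines[OF T \<open>A \<inter> B = {}\<close>, of "fst p" "snd p"] refines_Un
        unfolding P I by blast
    qed
    show "(\<lambda>S. (above A S, above B S)) ` ?I \<subseteq> ?P"
    proof (rule image_subsetI)
      fix S assume "S \<in> ?I"
      moreover have "above A S \<subseteq> S" "above B S \<subseteq> S" unfolding above_def by blast+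
      ultimately show "(above A S, above B S) \<in> ?P"
        using L_subset unfolding P I refines_def above_def by auto
    qed
  qed
qed

theorem Ideal_Un_poset_iso:
  assumes T: "A \<union> B \<in> L n d" and "A \<inter> B = {}"
  shows "poset_iso (Ideal n d A \<times> Ideal n d B) (prod_le (Lle d) (Lle d))
                   (Ideal n d (A \<union> B)) (Lle d)"
proof -
  have "A \<in> L n d" "B \<in> L n d" using L_subset[OF T] by blast+
  have "prod_le (Lle d) (Lle d) (S, S') (R, R') \<longleftrightarrow> Lle d (S \<union> S') (R \<union> R')"
    if "S \<in> Ideal n d A" "S' \<in> Ideal n d B" "R \<in> Ideal n d A" "R' \<in> Ideal n d B" for S S' R R'
  proof -
    have S: "S \<in> L n d" "refines S A" "S' \<in> L n d" "refines S' B"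
      and R: "R \<in> L n d" "refines R A" "R' \<in> L n d" "refines R' B"
      using that Ideal_eq \<open>A \<in> L n d\<close> \<open>B \<in> L n d\<close> by simp_all
    have "prod_le (Lle d) (Lle d) (S, S') (R, R') \<longleftrightarrow> refines S R \<and> refines S' R'"
      unfolding prod_le_def using S R by (simp add: Lle_iff_refines)
    also have "\<dots> \<longleftrightarrow> refines (S \<union> S') (R \<union> R')"
      using refines_Un_Un_iff[OF T \<open>A \<inter> B = {}\<close> S R(2,4)] by simp
    also have "\<dots> \<longleftrightarrow> Lle d (S \<union> S') (R \<union> R')"
      using Lle_iff_refines L_Un_of_refines[OF T \<open>A \<inter> B = {}\<close>] S R by metis
    finally show ?thesis .
  qed
  with bij_betw_Un_Ideal[OF assms] show ?thesis unfolding poset_iso_def by fastforce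
qed

theorem lemma3p6:
  fixes n d :: nat and T :: "nat set set" and T1 :: "nat set"
  assumes "n > d" and "T \<in> L n d" and "T1 \<in> T"
  shows "poset_iso (Ideal n d {T1} \<times> Ideal n d (T - {T1})) (prod_le (Lle d) (Lle d))
                   (Ideal n d T) (Lle d)"
proof -
  have "{T1} \<union> (T - {T1}) = T" using \<open>T1 \<in> T\<close> by blast
  then show ?thesis using Ideal_Un_poset_iso[of "{T1}" "T - {T1}" n d] \<open>T \<in> L n d\<close> by simp
qed

end
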